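(* Let $n\ge3$, $k\ge0$ with $k<n\le 2k$, and consider the $n+k$ points $u_1,\dots,u_{n+k}$ arranged clockwise on a circle. There do not exist points $v_1,v_2,v_3,v_4$ among these such that the pairs $(v_1,v_2)$ and $(v_3,v_4)$ each have size at most $k+1$, and (1) $v_3$ and $v_4$ both lie in $(v_1,v_2)$, and (2) every point $u_i$, $i\in[n+k]$, lies in $(v_1,v_2)$ or in $(v_3,v_4)$.
   Context: Points $u_1,\dots,u_{n+k}$ are evenly spaced on a circle in clockwise order. For points $v=u_i$ and $v'=u_j$, the size of the pair $(v,v')$ is the number of points visited (including both endpoints) when travelling clockwise from $v$ to $v'$, i.e. $j-i+1$ modulo $n+k$, taken in $\{1,\dots,n+k\}$. A point $w$ lies in $(v,v')$ if $w$ is one of the points visited when travelling clockwise from $v$ to $v'$ (endpoints included). *)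

theory Defs
  imports Main
begin

text \<open>Points u_1,...,u_N (N = n+k) on a circle are represented by their indices i in {1..N}.
  The size of the pair (u_i,u_j) is (j - i + 1) modulo N, taken in {1..N}; i.e. ((j - i) mod N) + 1.\<close>

definition pair_size :: "nat \<Rightarrow> nat \<Rightarrow> nat \<Rightarrow> nat" where
  "pair_size N i j = nat ((int j - int i) mod int N) + 1"

definition lies_in :: "nat \<Rightarrow> nat \<Rightarrow> nat \<Rightarrow> nat \<Rightarrow> bool" where
  "lies_in N w i j \<longleftrightarrow> (int w - int i) mod int N \<le> (int j - int i) mod int N"

end

theory Submission
  imports Defs
begin

text \<open>If (v1,v2) has size at most k+1 and both v3, v4 lie in it, then (v3,v4) cannot wrap
  around the circle, because its size would then exceed n \<ge> k+1. So (v3,v4) is a sub-arc of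
  (v1,v2), and the point just before v1 is covered by neither arc, since (v1,v2) has size
  at most k+1 < n+k.\<close>

definition cw_dist :: "nat \<Rightarrow> nat \<Rightarrow> nat \<Rightarrow> int" where
  "cw_dist N i j = (int j - int i) mod int N"

lemma lies_in_iff_cw_dist: "lies_in N w i j \<longleftrightarrow> cw_dist N i w \<le> cw_dist N i j"
  unfolding lies_in_def cw_dist_def ..

lemma pair_size_le_iff: "pair_size N i j \<le> s + 1 \<longleftrightarrow> cw_dist N i j \<le> int s"
  unfolding pair_size_def cw_dist_def by linarith

lemma cw_dist_nonneg: "0 < N \<Longrightarrow> 0 \<le> cw_dist N i j"
  unfolding cw_dist_def by simp

lemma cw_dist_less: "0 < N \<Longrightarrow> cw_dist N i j < int N"
  unfolding cw_dist_def by simp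

lemma cw_dist_via: "cw_dist N i j = (cw_dist N b j - cw_dist N b i) mod int N"
  unfolding cw_dist_def mod_diff_eq by simp

lemma mod_diff_of_residues:
  fixes a b m :: int
  assumes "0 \<le> a" "a < m" "0 \<le> b" "b < m"
  shows "(a - b) mod m = (if b \<le> a then a - b else a - b + m)"
proof (cases "b \<le> a")
  case True
  then show ?thesis using assms by (simp add: mod_pos_pos_trivial)
next
  case False
  have "(a - b) mod m = (a - b + m) mod m" by simp
  also have "\<dots> = a - b + m" using assms False by (intro mod_pos_pos_trivial) auto
  finally show ?thesis using False by simp
qed

lemma lies_in_subarc:
  assumes N: "0 < N"
    and a: "lies_in N a i j" and b: "lies_in N b i j"
    and short: "cw_dist N a b + cw_dist N i j < int N"
    and w: "lies_in N w a b"
  shows "lies_in N w i j"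
proof -
  define P Q A W where "P = cw_dist N i a" and "Q = cw_dist N i b"
    and "A = cw_dist N i j" and "W = cw_dist N i w"
  have bounds: "0 \<le> P" "P < int N" "0 \<le> Q" "Q < int N" "0 \<le> W" "W < int N"
    unfolding P_def Q_def A_def W_def using cw_dist_nonneg[OF N] cw_dist_less[OF N] by auto
  have "P \<le> A" "Q \<le> A"
    using a b unfolding lies_in_iff_cw_dist P_def Q_def A_def W_def by auto
  have ab: "cw_dist N a b = (Q - P) mod int N"
    unfolding P_def Q_def A_def W_def by (rule cw_dist_via)
  have "P \<le> Q"
  proof (rule ccontr)
    assume "\<not> P \<le> Q"
    then have "cw_dist N a b = Q - P + int N"
      using ab mod_diff_of_residues[of Q "int N" P] bounds by simp
    then show False using short \<open>P \<le> A\<close> bounds unfolding P_def Q_def A_def W_def by linarith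
  qed
  have "cw_dist N a w \<le> cw_dist N a b"
    using w unfolding lies_in_iff_cw_dist .
  moreover have "cw_dist N a w = (W - P) mod int N"
    unfolding P_def Q_def A_def W_def by (rule cw_dist_via)
  ultimately have "(W - P) mod int N \<le> Q - P"
    using ab \<open>P \<le> Q\<close> mod_diff_of_residues[of Q "int N" P] bounds by simp
  then have "W \<le> Q"
    using mod_diff_of_residues[of W "int N" P] bounds by (simp split: if_splits)
  then show ?thesis
    using \<open>Q \<le> A\<close> unfolding lies_in_iff_cw_dist P_def Q_def A_def W_def by simp
qed

lemma exists_point_outside_arc:
  assumes i: "i \<in> {1..N}" and size: "pair_size N i j < N"
  shows "\<exists>w \<in> {1..N}. \<not> lies_in N w i j"
proof
  define w where "w = (if i = 1 then N else i - 1)"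
  show "w \<in> {1..N}" using i w_def by auto
  have "cw_dist N i w = int N - 1"
  proof (cases "i = 1")
    case True
    then show ?thesis using i w_def by (simp add: cw_dist_def zmod_minus1)
  next
    case False
    then have "int w - int i = -1" using i w_def by auto
    then show ?thesis using i by (simp add: cw_dist_def zmod_minus1)
  qed
  moreover have "cw_dist N i j < int N - 1"
    using size unfolding pair_size_def cw_dist_def by linarith
  ultimately show "\<not> lies_in N w i j" unfolding lies_in_iff_cw_dist by simp
qed

theorem proposition5p2:
  fixes n k :: nat
  assumes "n \<ge> 3" and "k < n" and "n \<le> 2 * k"
  shows "\<not> (\<exists>v1 \<in> {1..n+k}. \<exists>v2 \<in> {1..n+k}. \<exists>v3 \<in> {1..n+k}. \<exists>v4 \<in> {1..n+k}.
            pair_size (n+k) v1 v2 \<le> k + 1 \<and> pair_size (n+k) v3 v4 \<le> k + 1 \<and>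
            lies_in (n+k) v3 v1 v2 \<and> lies_in (n+k) v4 v1 v2 \<and>
            (\<forall>i \<in> {1..n+k}. lies_in (n+k) i v1 v2 \<or> lies_in (n+k) i v3 v4))"
proof
  assume "\<exists>v1 \<in> {1..n+k}. \<exists>v2 \<in> {1..n+k}. \<exists>v3 \<in> {1..n+k}. \<exists>v4 \<in> {1..n+k}.
            pair_size (n+k) v1 v2 \<le> k + 1 \<and> pair_size (n+k) v3 v4 \<le> k + 1 \<and>
            lies_in (n+k) v3 v1 v2 \<and> lies_in (n+k) v4 v1 v2 \<and>
            (\<forall>i \<in> {1..n+k}. lies_in (n+k) i v1 v2 \<or> lies_in (n+k) i v3 v4)"
  then obtain v1 v2 v3 v4 where v1: "v1 \<in> {1..n+k}"
    and s12: "pair_size (n+k) v1 v2 \<le> k + 1" and s34: "pair_size (n+k) v3 v4 \<le> k + 1"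
    and v3: "lies_in (n+k) v3 v1 v2" and v4: "lies_in (n+k) v4 v1 v2"
    and cover: "\<forall>i \<in> {1..n+k}. lies_in (n+k) i v1 v2 \<or> lies_in (n+k) i v3 v4"
    by blast
  have "pair_size (n+k) v1 v2 < n + k" using s12 assms by linarith
  then obtain w where w: "w \<in> {1..n+k}" and outside: "\<not> lies_in (n+k) w v1 v2"
    using exists_point_outside_arc[OF v1] by blast
  have "cw_dist (n+k) v3 v4 + cw_dist (n+k) v1 v2 < int (n+k)"
    using s12 s34 assms unfolding pair_size_le_iff by linarith
  then have "lies_in (n+k) w v3 v4 \<Longrightarrow> lies_in (n+k) w v1 v2"
    using lies_in_subarc[OF _ v3 v4] assms by simp
  then show False using cover w outside by blast
qed

end
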